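(* Let $\epsilon\ge0$ and let $\mu,\nu$ be finite positive measures on $\mathbb{R}$, absolutely continuous with respect to Lebesgue measure, with $\mu(\mathbb{R})=\nu(\mathbb{R})=U$. Let $F(x)=\mu((-\infty,x])$, $G(x)=\nu((-\infty,x])$, and $F^{-1}(t)=\inf\{x\in\mathbb{R}:F(x)\ge t\}$, $G^{-1}(t)=\inf\{x:G(x)\ge t\}$ for $t\in(0,U)$. Then $D_\epsilon(\mu,\nu)=0$ if and only if $\sup_{t\in(0,U)}|F^{-1}(t)-G^{-1}(t)|\le 2\epsilon$.
   Context: $D_\epsilon(\mu,\nu)=\inf_\pi\pi\big(\{(x,x'):|x-x'|>2\epsilon\}\big)$, the infimum over measures $\pi$ on $\mathbb{R}\times\mathbb{R}$ with marginals $\mu$ and $\nu$. *)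

theory Defs
  imports "HOL-Probability.Probability"
begin

definition couplings :: "real measure \<Rightarrow> real measure \<Rightarrow> (real \<times> real) measure set" where
  "couplings \<mu> \<nu> = {\<pi>. sets \<pi> = sets (borel \<Otimes>\<^sub>M borel) \<and>
       distr \<pi> borel fst = \<mu> \<and> distr \<pi> borel snd = \<nu>}"

definition D_eps :: "real \<Rightarrow> real measure \<Rightarrow> real measure \<Rightarrow> ennreal" where
  "D_eps \<epsilon> \<mu> \<nu> = (INF \<pi>\<in>couplings \<mu> \<nu>. emeasure \<pi> {p. \<bar>fst p - snd p\<bar> > 2 * \<epsilon>})"

definition cdf_of :: "real measure \<Rightarrow> real \<Rightarrow> real" where
  "cdf_of \<mu> x = measure \<mu> {..x}"

definition qinv :: "real measure \<Rightarrow> real \<Rightarrow> real" where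
  "qinv \<mu> t = Inf {x. cdf_of \<mu> x \<ge> t}"

end

theory Submission
  imports Defs
begin

text \<open>If some coupling puts arbitrarily little mass on pairs further apart than 2\<epsilon>, then
  F(x) \<le> G(x + 2\<epsilon>) and G(x) \<le> F(x + 2\<epsilon>), and the Galois connection
  F^-1(t) \<le> x \<longleftrightarrow> t \<le> F(x) turns these into |F^-1(t) - G^-1(t)| \<le> 2\<epsilon>.
  Conversely, Lebesgue measure on (0, U) pushed forward along t \<mapsto> (F^-1(t), G^-1(t)) is a coupling
  of \<mu> and \<nu>, and it charges only pairs with |x - x'| > 2\<epsilon> at parameters t where the quantile
  functions differ by more than 2\<epsilon>. Neither direction needs absolute continuity.\<close>

lemma cdf_of_eq_cdf: "cdf_of M = cdf M"
  by (simp add: fun_eq_iff cdf_of_def cdf_def)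

context finite_borel_measure
begin

lemma right_continuous_mono_cdf: "right_continuous_mono (cdf M) 0 (measure M (space M))"
proof
  show "continuous (at_right x) (cdf M)" for x
    by (rule cdf_is_right_cont)
  show "mono (cdf M)"
    by (rule monoI) (rule cdf_nondecreasing)
  show "(cdf M \<longlongrightarrow> 0) at_bot"
    by (rule cdf_lim_at_bot)
  show "(cdf M \<longlongrightarrow> measure M (space M)) at_top"
    by (rule cdf_lim_at_top)
qed

lemma qinv_le_iff:
  assumes "0 < t" "t < measure M (space M)"
  shows "qinv M t \<le> x \<longleftrightarrow> t \<le> cdf M x"
proof -
  have "qinv M t = Inf {x. t \<le> cdf M x}"
    by (simp add: qinv_def cdf_of_eq_cdf)
  then show ?thesis
    using right_continuous_mono.pseudoinverse[OF right_continuous_mono_cdf assms, symmetric] by simp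
qed

lemma borel_measurable_qinv:
  "qinv M \<in> borel_measurable (restrict_space lborel {0<..<measure M (space M)})"
proof -
  have "(\<lambda>\<omega>. Inf {x. \<omega> \<le> cdf M x}) \<in> borel_measurable (restrict_space borel {0<..<measure M (space M)})"
    by (rule borel_measurable_mono_on_fnc[OF right_continuous_mono.mono_I[OF right_continuous_mono_cdf]])
  then show ?thesis
    by (simp add: qinv_def[abs_def] cdf_of_eq_cdf
        measurable_cong_sets[OF sets_restrict_space_cong[OF sets_lborel] refl])
qed

lemma distr_qinv: "distr (restrict_space lborel {0<..<measure M (space M)}) borel (qinv M) = M"
proof (rule cdf_unique')
  let ?U = "measure M (space M)"
  let ?D = "distr (restrict_space lborel {0<..<?U}) borel (qinv M)"
  have emeasure_D: "emeasure ?D A = emeasure lborel ({0<..<?U} \<inter> qinv M -` A)"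
    if "A \<in> sets borel" for A
  proof -
    have "emeasure ?D A = emeasure (restrict_space lborel {0<..<?U}) (qinv M -` A \<inter> {0<..<?U})"
      using emeasure_distr[OF borel_measurable_qinv that] by (simp add: space_restrict_space)
    also have "\<dots> = emeasure lborel ({0<..<?U} \<inter> qinv M -` A)"
      by (subst emeasure_restrict_space) (auto simp: Int_commute)
    finally show ?thesis .
  qed
  have "emeasure ?D (space ?D) = ennreal ?U"
    using emeasure_D[of UNIV] by simp
  then show "finite_borel_measure ?D"
    by (simp add: finite_borel_measure_def finite_borel_measure_axioms_def finite_measureI)
  show "finite_borel_measure M"
    by (rule finite_borel_measure_axioms)
  show "cdf ?D = cdf M"
  proof
    fix x
    let ?c = "cdf M x"
    have "{0<..<?U} \<inter> qinv M -` {..x} = {0<..<?U} \<inter> {..?c}"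
      using qinv_le_iff by auto
    then have "cdf ?D x = measure lborel ({0<..<?U} \<inter> {..?c})"
      using emeasure_D[of "{..x}"] by (simp add: cdf_def2 measure_def)
    also have "\<dots> = ?c"
    proof (cases "?c = ?U")
      case True
      then have "{0<..<?U} \<inter> {..?c} = {0<..<?U}"
        by auto
      then show ?thesis
        using True by simp
    next
      case False
      then have "{0<..<?U} \<inter> {..?c} = {0<..?c}"
        using cdf_bounded[of x] by auto
      then show ?thesis using cdf_nonneg[of x] by simp
    qed
    finally show "cdf ?D x = ?c" .
  qed
qed

end

lemma sets_abs_diff_gt: "{p :: real \<times> real. c < \<bar>fst p - snd p\<bar>} \<in> sets (borel \<Otimes>\<^sub>M borel)"
proof -
  have "Measurable.pred (borel \<Otimes>\<^sub>M borel) (\<lambda>p :: real \<times> real. c < \<bar>fst p - snd p\<bar>)"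
    by measurable
  then show ?thesis
    by (simp add: pred_def space_pair_measure)
qed

lemma sets_coupling: "\<pi> \<in> couplings \<mu> \<nu> \<Longrightarrow> sets \<pi> = sets (borel \<Otimes>\<^sub>M borel)"
  by (simp add: couplings_def)

lemma space_coupling: "\<pi> \<in> couplings \<mu> \<nu> \<Longrightarrow> space \<pi> = UNIV"
  using sets_eq_imp_space_eq[OF sets_coupling] by (simp add: space_pair_measure)

lemma measurable_coupling_fst: "\<pi> \<in> couplings \<mu> \<nu> \<Longrightarrow> fst \<in> measurable \<pi> borel"
  using measurable_cong_sets[OF sets_coupling refl] measurable_fst by blast

lemma measurable_coupling_snd: "\<pi> \<in> couplings \<mu> \<nu> \<Longrightarrow> snd \<in> measurable \<pi> borel"
  using measurable_cong_sets[OF sets_coupling refl] measurable_snd by blast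

lemma measurable_coupling_swap:
  assumes \<pi>: "\<pi> \<in> couplings \<mu> \<nu>"
  shows "prod.swap \<in> measurable \<pi> (borel \<Otimes>\<^sub>M (borel :: real measure))"
proof -
  have "prod.swap = (\<lambda>p :: real \<times> real. (snd p, fst p))"
    by (simp add: fun_eq_iff)
  then show ?thesis
    using measurable_Pair[OF measurable_coupling_snd[OF \<pi>] measurable_coupling_fst[OF \<pi>]] by simp
qed

lemma emeasure_coupling_fst:
  assumes \<pi>: "\<pi> \<in> couplings \<mu> \<nu>" and A: "A \<in> sets borel"
  shows "emeasure \<mu> A = emeasure \<pi> (fst -` A)"
proof -
  have "emeasure (distr \<pi> borel fst) A = emeasure \<pi> (fst -` A)"
    using A measurable_coupling_fst[OF \<pi>] by (simp add: emeasure_distr space_coupling[OF \<pi>])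
  then show ?thesis
    using \<pi> by (simp add: couplings_def)
qed

lemma emeasure_coupling_snd:
  assumes \<pi>: "\<pi> \<in> couplings \<mu> \<nu>" and A: "A \<in> sets borel"
  shows "emeasure \<nu> A = emeasure \<pi> (snd -` A)"
proof -
  have "emeasure (distr \<pi> borel snd) A = emeasure \<pi> (snd -` A)"
    using A measurable_coupling_snd[OF \<pi>] by (simp add: emeasure_distr space_coupling[OF \<pi>])
  then show ?thesis
    using \<pi> by (simp add: couplings_def)
qed

lemma coupling_swap:
  assumes \<pi>: "\<pi> \<in> couplings \<mu> \<nu>"
  shows "distr \<pi> (borel \<Otimes>\<^sub>M borel) prod.swap \<in> couplings \<nu> \<mu>"
proof -
  let ?\<pi>' = "distr \<pi> (borel \<Otimes>\<^sub>M borel) prod.swap"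
  have "distr ?\<pi>' borel fst = distr \<pi> borel (fst \<circ> prod.swap)"
    by (rule distr_distr[OF measurable_fst measurable_coupling_swap[OF \<pi>]])
  moreover have "distr ?\<pi>' borel snd = distr \<pi> borel (snd \<circ> prod.swap)"
    by (rule distr_distr[OF measurable_snd measurable_coupling_swap[OF \<pi>]])
  ultimately show ?thesis
    using \<pi> by (simp add: couplings_def comp_def)
qed

lemma D_eps_commute: "D_eps \<epsilon> \<mu> \<nu> = D_eps \<epsilon> \<nu> \<mu>"
proof -
  let ?far = "{p :: real \<times> real. 2 * \<epsilon> < \<bar>fst p - snd p\<bar>}"
  have "D_eps \<epsilon> \<nu> \<mu> \<le> D_eps \<epsilon> \<mu> \<nu>" for \<mu> \<nu>
    unfolding D_eps_def
  proof (rule INF_greatest)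
    fix \<pi> assume \<pi>: "\<pi> \<in> couplings \<mu> \<nu>"
    have "(INF \<pi>'\<in>couplings \<nu> \<mu>. emeasure \<pi>' ?far)
        \<le> emeasure (distr \<pi> (borel \<Otimes>\<^sub>M borel) prod.swap) ?far"
      by (rule INF_lower[OF coupling_swap[OF \<pi>]])
    also have "\<dots> = emeasure \<pi> (prod.swap -` ?far \<inter> space \<pi>)"
      by (rule emeasure_distr[OF measurable_coupling_swap[OF \<pi>] sets_abs_diff_gt])
    also have "prod.swap -` ?far \<inter> space \<pi> = ?far"
      by (auto simp: space_coupling[OF \<pi>])
    finally show "(INF \<pi>'\<in>couplings \<nu> \<mu>. emeasure \<pi>' ?far) \<le> emeasure \<pi> ?far" .
  qed
  from this[of \<mu> \<nu>] this[of \<nu> \<mu>] show ?thesis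
    by (rule antisym)
qed

lemma emeasure_atMost_le_coupling:
  assumes \<pi>: "\<pi> \<in> couplings \<mu> \<nu>"
  shows "emeasure \<mu> {..x} \<le> emeasure \<nu> {..x + c} + emeasure \<pi> {p. c < \<bar>fst p - snd p\<bar>}"
proof -
  let ?far = "{p :: real \<times> real. c < \<bar>fst p - snd p\<bar>}"
  have sets: "snd -` {..x + c} \<in> sets \<pi>" "?far \<in> sets \<pi>"
    using measurable_sets[OF measurable_coupling_snd[OF \<pi>], of "{..x + c}"] sets_abs_diff_gt
    by (simp_all add: space_coupling[OF \<pi>] sets_coupling[OF \<pi>])
  have "emeasure \<mu> {..x} = emeasure \<pi> (fst -` {..x})"
    by (rule emeasure_coupling_fst[OF \<pi>]) simp
  also have "\<dots> \<le> emeasure \<pi> (snd -` {..x + c} \<union> ?far)"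
    using sets by (intro emeasure_mono) auto
  also have "\<dots> \<le> emeasure \<pi> (snd -` {..x + c}) + emeasure \<pi> ?far"
    using sets by (rule emeasure_subadditive)
  also have "emeasure \<pi> (snd -` {..x + c}) = emeasure \<nu> {..x + c}"
    by (rule emeasure_coupling_snd[OF \<pi>, symmetric]) simp
  finally show ?thesis .
qed

lemma emeasure_atMost_le_if_D_eps_eq_0:
  assumes "D_eps \<epsilon> \<mu> \<nu> = 0"
  shows "emeasure \<mu> {..x} \<le> emeasure \<nu> {..x + 2 * \<epsilon>}"
proof (rule ennreal_le_epsilon)
  fix e :: real assume "0 < e"
  with assms have "D_eps \<epsilon> \<mu> \<nu> < e"
    by simp
  then obtain \<pi> where \<pi>: "\<pi> \<in> couplings \<mu> \<nu>"
    and small: "emeasure \<pi> {p. 2 * \<epsilon> < \<bar>fst p - snd p\<bar>} < e"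
    unfolding D_eps_def by (auto simp: INF_less_iff)
  have "emeasure \<mu> {..x} \<le> emeasure \<nu> {..x + 2 * \<epsilon>} + emeasure \<pi> {p. 2 * \<epsilon> < \<bar>fst p - snd p\<bar>}"
    by (rule emeasure_atMost_le_coupling[OF \<pi>])
  also have "\<dots> \<le> emeasure \<nu> {..x + 2 * \<epsilon>} + e"
    using small by (intro add_left_mono less_imp_le)
  finally show "emeasure \<mu> {..x} \<le> emeasure \<nu> {..x + 2 * \<epsilon>} + e" .
qed

definition quantile_coupling :: "real measure \<Rightarrow> real measure \<Rightarrow> (real \<times> real) measure" where
  "quantile_coupling \<mu> \<nu> =
     distr (restrict_space lborel {0<..<measure \<mu> (space \<mu>)}) (borel \<Otimes>\<^sub>M borel)
       (\<lambda>t. (qinv \<mu> t, qinv \<nu> t))"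

context
  fixes \<mu> \<nu> :: "real measure"
  assumes \<mu>: "finite_borel_measure \<mu>" and \<nu>: "finite_borel_measure \<nu>"
    and mass: "measure \<nu> (space \<nu>) = measure \<mu> (space \<mu>)"
begin

lemma measurable_quantile_pair:
  "(\<lambda>t. (qinv \<mu> t, qinv \<nu> t))
     \<in> measurable (restrict_space lborel {0<..<measure \<mu> (space \<mu>)}) (borel \<Otimes>\<^sub>M borel)"
  using finite_borel_measure.borel_measurable_qinv[OF \<mu>] finite_borel_measure.borel_measurable_qinv[OF \<nu>]
  by (intro measurable_Pair) (simp_all add: mass)

lemma quantile_coupling_in_couplings: "quantile_coupling \<mu> \<nu> \<in> couplings \<mu> \<nu>"
proof -
  let ?Q = "restrict_space lborel {0<..<measure \<mu> (space \<mu>)}"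
  have "distr (quantile_coupling \<mu> \<nu>) borel fst = distr ?Q borel (qinv \<mu>)"
    unfolding quantile_coupling_def
    by (simp add: distr_distr[OF measurable_fst measurable_quantile_pair] comp_def)
  also have "\<dots> = \<mu>"
    by (rule finite_borel_measure.distr_qinv[OF \<mu>])
  finally have marginal_fst: "distr (quantile_coupling \<mu> \<nu>) borel fst = \<mu>" .
  have "distr (quantile_coupling \<mu> \<nu>) borel snd = distr ?Q borel (qinv \<nu>)"
    unfolding quantile_coupling_def
    by (simp add: distr_distr[OF measurable_snd measurable_quantile_pair] comp_def)
  also have "\<dots> = \<nu>"
    using finite_borel_measure.distr_qinv[OF \<nu>] by (simp add: mass)
  finally show ?thesis
    using marginal_fst by (simp add: couplings_def quantile_coupling_def)
qed

lemma emeasure_quantile_coupling_abs_diff_gt: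
  "emeasure (quantile_coupling \<mu> \<nu>) {p. c < \<bar>fst p - snd p\<bar>}
     = emeasure lborel {t \<in> {0<..<measure \<mu> (space \<mu>)}. c < \<bar>qinv \<mu> t - qinv \<nu> t\<bar>}"
proof -
  let ?Q = "restrict_space lborel {0<..<measure \<mu> (space \<mu>)}"
  let ?gap = "{t \<in> {0<..<measure \<mu> (space \<mu>)}. c < \<bar>qinv \<mu> t - qinv \<nu> t\<bar>}"
  have "emeasure (quantile_coupling \<mu> \<nu>) {p. c < \<bar>fst p - snd p\<bar>}
      = emeasure ?Q ((\<lambda>t. (qinv \<mu> t, qinv \<nu> t)) -` {p. c < \<bar>fst p - snd p\<bar>} \<inter> space ?Q)"
    unfolding quantile_coupling_def by (rule emeasure_distr[OF measurable_quantile_pair sets_abs_diff_gt])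
  also have "(\<lambda>t. (qinv \<mu> t, qinv \<nu> t)) -` {p. c < \<bar>fst p - snd p\<bar>} \<inter> space ?Q = ?gap"
    by (auto simp: space_restrict_space)
  also have "emeasure ?Q ?gap = emeasure lborel ?gap"
    by (rule emeasure_restrict_space) auto
  finally show ?thesis .
qed

lemma D_eps_le_emeasure_qinv_gap:
  "D_eps \<epsilon> \<mu> \<nu> \<le> emeasure lborel {t \<in> {0<..<measure \<mu> (space \<mu>)}. 2 * \<epsilon> < \<bar>qinv \<mu> t - qinv \<nu> t\<bar>}"
  unfolding D_eps_def emeasure_quantile_coupling_abs_diff_gt[symmetric]
  by (rule INF_lower[OF quantile_coupling_in_couplings])

lemma qinv_le_qinv_add_if_cdf_le:
  assumes t: "t \<in> {0<..<measure \<mu> (space \<mu>)}"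
    and shift: "\<And>x. cdf \<mu> x \<le> cdf \<nu> (x + c)"
  shows "qinv \<nu> t \<le> qinv \<mu> t + c"
proof -
  have "t \<le> cdf \<mu> (qinv \<mu> t)"
    using finite_borel_measure.qinv_le_iff[OF \<mu>, of t "qinv \<mu> t"] t by simp
  also have "\<dots> \<le> cdf \<nu> (qinv \<mu> t + c)"
    by (rule shift)
  finally show ?thesis
    using finite_borel_measure.qinv_le_iff[OF \<nu>] t mass by simp
qed

lemma qinv_le_qinv_add_if_D_eps_eq_0:
  assumes "t \<in> {0<..<measure \<mu> (space \<mu>)}" and D: "D_eps \<epsilon> \<mu> \<nu> = 0"
  shows "qinv \<nu> t \<le> qinv \<mu> t + 2 * \<epsilon>"
proof (rule qinv_le_qinv_add_if_cdf_le[OF assms(1)])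
  fix x
  show "cdf \<mu> x \<le> cdf \<nu> (x + 2 * \<epsilon>)"
    using emeasure_atMost_le_if_D_eps_eq_0[OF D, of x]
    by (simp add: cdf_def finite_measure.emeasure_eq_measure[OF finite_borel_measure.axioms(1)[OF \<mu>]]
        finite_measure.emeasure_eq_measure[OF finite_borel_measure.axioms(1)[OF \<nu>]])
qed

end

lemma abs_qinv_diff_le_if_D_eps_eq_0:
  assumes \<mu>: "finite_borel_measure \<mu>" and \<nu>: "finite_borel_measure \<nu>"
    and mass: "measure \<nu> (space \<nu>) = measure \<mu> (space \<mu>)"
    and t: "t \<in> {0<..<measure \<mu> (space \<mu>)}" and D: "D_eps \<epsilon> \<mu> \<nu> = 0"
  shows "\<bar>qinv \<mu> t - qinv \<nu> t\<bar> \<le> 2 * \<epsilon>"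
proof -
  have "qinv \<nu> t \<le> qinv \<mu> t + 2 * \<epsilon>"
    by (rule qinv_le_qinv_add_if_D_eps_eq_0[OF \<mu> \<nu> mass t D])
  moreover have "qinv \<mu> t \<le> qinv \<nu> t + 2 * \<epsilon>"
    using qinv_le_qinv_add_if_D_eps_eq_0[OF \<nu> \<mu> mass[symmetric]] t D
    by (simp add: mass D_eps_commute[of \<epsilon> \<nu> \<mu>])
  ultimately show ?thesis
    by linarith
qed

theorem theorem6:
  fixes \<epsilon> U :: real and \<mu> \<nu> :: "real measure"
  assumes "\<epsilon> \<ge> 0" and "U \<ge> 0"
    and "sets \<mu> = sets borel" and "sets \<nu> = sets borel"
    and "finite_measure \<mu>" and "finite_measure \<nu>"
    and "absolutely_continuous lborel \<mu>" and "absolutely_continuous lborel \<nu>"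
    and "emeasure \<mu> UNIV = ennreal U" and "emeasure \<nu> UNIV = ennreal U"
  shows "D_eps \<epsilon> \<mu> \<nu> = 0 \<longleftrightarrow>
    (SUP t\<in>{0<..<U}. ereal \<bar>qinv \<mu> t - qinv \<nu> t\<bar>) \<le> ereal (2 * \<epsilon>)"
proof -
  have \<mu>: "finite_borel_measure \<mu>" and \<nu>: "finite_borel_measure \<nu>"
    using assms(3-6) by (simp_all add: finite_borel_measure_def finite_borel_measure_axioms_def)
  have "space \<mu> = UNIV" "space \<nu> = UNIV"
    using sets_eq_imp_space_eq[OF assms(3)] sets_eq_imp_space_eq[OF assms(4)] by simp_all
  then have mass: "measure \<mu> (space \<mu>) = U" "measure \<nu> (space \<nu>) = U"
    using assms(2,9,10) by (simp_all add: measure_def)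
  show ?thesis
  proof
    assume "D_eps \<epsilon> \<mu> \<nu> = 0"
    then show "(SUP t\<in>{0<..<U}. ereal \<bar>qinv \<mu> t - qinv \<nu> t\<bar>) \<le> ereal (2 * \<epsilon>)"
      using abs_qinv_diff_le_if_D_eps_eq_0[OF \<mu> \<nu>] mass by (intro SUP_least) simp
  next
    assume "(SUP t\<in>{0<..<U}. ereal \<bar>qinv \<mu> t - qinv \<nu> t\<bar>) \<le> ereal (2 * \<epsilon>)"
    then have no_gap: "{t \<in> {0<..<U}. 2 * \<epsilon> < \<bar>qinv \<mu> t - qinv \<nu> t\<bar>} = {}"
      by (auto simp: SUP_le_iff not_less)
    have "D_eps \<epsilon> \<mu> \<nu> \<le> emeasure lborel {t \<in> {0<..<U}. 2 * \<epsilon> < \<bar>qinv \<mu> t - qinv \<nu> t\<bar>}"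
      using D_eps_le_emeasure_qinv_gap[OF \<mu> \<nu>, of \<epsilon>] mass by simp
    then show "D_eps \<epsilon> \<mu> \<nu> = 0"
      unfolding no_gap by simp
  qed
qed

end
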